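(* Let $A=(\alpha_n)_{n\in\mathbb{N}}$ and $B=(\beta_m)_{m\in\mathbb{N}}$ be sequences of positive real numbers with $\alpha_j\neq\alpha_\ell$ and $\beta_j\neq\beta_\ell$ for all $1\le j<\ell<\infty$. Consider urn model II with these weights, and let $X_{n,m}$ be the number of white balls remaining when the process stops, started from $n$ white and $m$ black balls. Then for $n,m\ge 1$ and $1\le k\le n$, \[ \mathbb{P}\{X_{n,m}=k\}=\alpha_k\sum_{j=k}^{n}\frac{\alpha_j^{m+n-k-1}}{\Big(\prod_{\substack{\ell=k\\ \ell\neq j}}^{n}(\alpha_j-\alpha_\ell)\Big)\Big(\prod_{h=1}^{m}(\alpha_j+\beta_h)\Big)}=\alpha_k\sum_{\ell=1}^{m}\frac{\beta_\ell^{n+m-1-k}}{\Big(\prod_{j=k}^{n}(\beta_\ell+\alpha_j)\Big)\Big(\prod_{\substack{h=1\\ h\neq\ell}}^{m}(\beta_\ell-\beta_h)\Big)}, \] and for $n,m\ge 1$, \[ \mathbb{P}\{X_{n,m}=0\}=1-\sum_{j=1}^{n}\frac{\alpha_j^{n+m-1}}{\Big(\prod_{\substack{\ell=1\\ \ell\neq j}}^{n}(\alpha_j-\alpha_\ell)\Big)\Big(\prod_{h=1}^{m}(\alpha_j+\beta_h)\Big)}=\sum_{\ell=1}^{m}\frac{\beta_\ell^{n+m-1}}{\Big(\prod_{j=1}^{n}(\beta_\ell+\alpha_j)\Big)\Big(\prod_{\substack{h=1\\ h\neq\ell}}^{m}(\beta_\ell-\beta_h)\Big)}. \]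
   Context: Urn model II (OK Corral urn with general weights): an urn initially contains $n$ white and $m$ black balls. At each step, if the urn currently contains $n'$ white and $m'$ black balls, a white ball is drawn with probability $\beta_{m'}/(\alpha_{n'}+\beta_{m'})$ and a black ball with probability $\alpha_{n'}/(\alpha_{n'}+\beta_{m'})$; the drawn ball is discarded. The process stops as soon as one colour is exhausted. $X_{n,m}$ denotes the number of white balls in the urn when the process stops ($0$ if the white balls are exhausted first). Empty products equal $1$. *)

theory Defs
  imports "HOL-Probability.Probability"
begin

text \<open>With n' white and m' black balls present, a white ball is drawn (and discarded)
  with probability be m' / (al n' + be m'), a black one otherwise.\<close>

fun urnII :: "(nat \<Rightarrow> real) \<Rightarrow> (nat \<Rightarrow> real) \<Rightarrow> nat \<Rightarrow> nat \<Rightarrow> nat pmf" where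
  "urnII al be 0 m = return_pmf 0"
| "urnII al be (Suc n) 0 = return_pmf (Suc n)"
| "urnII al be (Suc n) (Suc m) =
     bind_pmf (bernoulli_pmf (be (Suc m) / (al (Suc n) + be (Suc m))))
       (\<lambda>w. if w then urnII al be n (Suc m) else urnII al be (Suc n) m)"

end

theory Submission
  imports Defs
begin

text \<open>Write P(n, m) for the probability that k white balls survive. Conditioning on the
  first draw gives (\<alpha> n + \<beta> m) P(n, m) = \<beta> m P(n - 1, m) + \<alpha> n P(n, m - 1), and this
  recurrence determines P from its values on the lines n = 0 and m = 0. Every partial-fraction
  term w j \<alpha> j ^ (n + m) / (\<Prod>l\<noteq>j. \<alpha> j - \<alpha> l) (\<Prod>h. \<alpha> j + \<beta> h) solves the same recurrence,
  and on the boundary the sums reduce to divided differences \<Sum>j. x j ^ r / (\<Prod>l\<noteq>j. x j - x l)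
  of powers at N distinct nodes, which vanish for r < N - 1 and equal 1 for r = N - 1.
  The \<beta>-forms follow from the same fact for the nodes \<alpha> j and -\<beta> h taken together: their
  divided difference splits into the \<alpha>-sum plus, up to sign, the \<beta>-sum.\<close>

definition power_divdiff :: "('a \<Rightarrow> 'b::field) \<Rightarrow> 'a set \<Rightarrow> nat \<Rightarrow> 'b" where
  "power_divdiff x S r = (\<Sum>j\<in>S. x j ^ r / (\<Prod>l\<in>S - {j}. x j - x l))"

lemma power_divdiff_Suc:
  assumes "finite S" "a \<in> S" "inj_on x S"
  shows "power_divdiff x S (Suc r) = x a * power_divdiff x S r + power_divdiff x (S - {a}) r"
proof -
  define T where "T = S - {a}"
  have S: "S = insert a T" "a \<notin> T" "finite T"
    using assms by (auto simp: T_def)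
  have "x j ^ Suc r / (\<Prod>l\<in>S - {j}. x j - x l)
      = x a * (x j ^ r / (\<Prod>l\<in>S - {j}. x j - x l)) + x j ^ r / (\<Prod>l\<in>T - {j}. x j - x l)"
    if j: "j \<in> T" for j
  proof -
    have "x j \<noteq> x a"
      using j S assms(3) by (metis inj_on_def insertCI)
    moreover have "S - {j} = insert a (T - {j})"
      using j S by auto
    then have prod_S: "(\<Prod>l\<in>S - {j}. x j - x l) = (x j - x a) * (\<Prod>l\<in>T - {j}. x j - x l)"
      using S by simp
    ultimately show ?thesis
      unfolding prod_S by (cases "(\<Prod>l\<in>T - {j}. x j - x l) = 0") (simp_all add: field_simps)
  qed
  then have "(\<Sum>j\<in>T. x j ^ Suc r / (\<Prod>l\<in>S - {j}. x j - x l))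
      = x a * (\<Sum>j\<in>T. x j ^ r / (\<Prod>l\<in>S - {j}. x j - x l)) + power_divdiff x T r"
    by (simp add: power_divdiff_def sum.distrib sum_distrib_left)
  then show ?thesis
    using S by (simp add: power_divdiff_def T_def[symmetric] algebra_simps)
qed

lemma power_divdiff_below_card:
  assumes "finite S" "inj_on x S" "r < card S"
  shows "power_divdiff x S r = (if Suc r = card S then 1 else 0)"
  using assms
proof (induction "card S" arbitrary: S r rule: less_induct)
  case less
  show ?case
  proof (cases "card S = 1")
    case True
    then obtain a where "S = {a}" by (auto simp: card_Suc_eq)
    with less.prems show ?thesis by (simp add: power_divdiff_def)
  next
    case False
    with less.prems have "1 < card S" by linarith
    then obtain a b where ab: "a \<in> S" "b \<in> S" "a \<noteq> b"
      using card_le_Suc0_iff_eq[OF less.prems(1)] by (metis One_nat_def not_le)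
    have card_del: "card (S - {c}) = card S - 1" if "c \<in> S" for c
      using that less.prems by simp
    have IH: "power_divdiff x (S - {c}) r = (if Suc r = card S - 1 then 1 else 0)"
      if "c \<in> S" "Suc r < card S" for c r
      using less.hyps[of "S - {c}" r] less.prems that card_del[OF that(1)]
      by (simp add: card_Diff1_less inj_on_diff)
    have low: "power_divdiff x S r = 0" if "Suc r < card S" for r
    proof -
      \<comment> \<open>subtracting the recurrence at two different nodes eliminates the degree r+1 term\<close>
      have "(x a - x b) * power_divdiff x S r
          = power_divdiff x (S - {b}) r - power_divdiff x (S - {a}) r"
        using power_divdiff_Suc[OF less.prems(1) ab(1) less.prems(2), of r]
          power_divdiff_Suc[OF less.prems(1) ab(2) less.prems(2), of r]
        by (simp add: algebra_simps)
      also have "\<dots> = 0"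
        using IH[OF ab(1) that] IH[OF ab(2) that] by simp
      finally show ?thesis
        using ab less.prems(2) by (simp add: inj_on_eq_iff)
    qed
    show ?thesis
    proof (cases "Suc r = card S")
      case True
      with False obtain s where s: "r = Suc s" "Suc (Suc s) = card S"
        by (cases r) auto
      have "power_divdiff x S r = x a * power_divdiff x S s + power_divdiff x (S - {a}) s"
        using power_divdiff_Suc[OF less.prems(1) ab(1) less.prems(2)] s by simp
      also have "\<dots> = 1"
        using low[of s] IH[OF ab(1), of s] s by simp
      finally show ?thesis using True by simp
    qed (use low less.prems in auto)
  qed
qed

lemma power_divdiff_Plus:
  assumes "finite A" "finite B"
  shows "power_divdiff (case_sum x y) (A <+> B) r
    = (\<Sum>j\<in>A. x j ^ r / ((\<Prod>l\<in>A - {j}. x j - x l) * (\<Prod>h\<in>B. x j - y h)))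
    + (\<Sum>h\<in>B. y h ^ r / ((\<Prod>j\<in>A. y h - x j) * (\<Prod>l\<in>B - {h}. y h - y l)))"
proof -
  have "(A <+> B) - {Inl j} = (A - {j}) <+> B" "(A <+> B) - {Inr h} = A <+> (B - {h})" for j h
    by auto
  then show ?thesis
    using assms by (simp add: power_divdiff_def sum.Plus prod.Plus comp_def)
qed

lemma sum_power_fractions_two_families:
  fixes \<alpha> \<beta> :: "'a \<Rightarrow> real"
  assumes "finite A" "finite B" "inj_on \<alpha> A" "inj_on \<beta> B"
    and "\<And>j h. j \<in> A \<Longrightarrow> h \<in> B \<Longrightarrow> \<alpha> j + \<beta> h \<noteq> 0"
    and "r < card A + card B"
  shows "(\<Sum>j\<in>A. \<alpha> j ^ r / ((\<Prod>l\<in>A - {j}. \<alpha> j - \<alpha> l) * (\<Prod>h\<in>B. \<alpha> j + \<beta> h)))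
    + (-1) ^ (r + card A + card B + 1)
      * (\<Sum>h\<in>B. \<beta> h ^ r / ((\<Prod>j\<in>A. \<beta> h + \<alpha> j) * (\<Prod>l\<in>B - {h}. \<beta> h - \<beta> l)))
    = (if Suc r = card A + card B then 1 else 0)"
proof -
  let ?z = "case_sum \<alpha> (\<lambda>h. - \<beta> h)"
  have sign: "(-1) ^ (r + card A + card B + 1)
        * (\<beta> h ^ r / ((\<Prod>j\<in>A. \<beta> h + \<alpha> j) * (\<Prod>l\<in>B - {h}. \<beta> h - \<beta> l)))
      = (- \<beta> h) ^ r / ((\<Prod>j\<in>A. - \<beta> h - \<alpha> j) * (\<Prod>l\<in>B - {h}. - \<beta> h - - \<beta> l))"
    if h: "h \<in> B" for h
  proof -
    have prod_A: "(\<Prod>j\<in>A. - \<beta> h - \<alpha> j) = (-1) ^ card A * (\<Prod>j\<in>A. \<beta> h + \<alpha> j)"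
      using prod_uminus[of "\<lambda>j. \<beta> h + \<alpha> j" A] by simp
    have prod_B: "(\<Prod>l\<in>B - {h}. - \<beta> h - - \<beta> l) = (-1) ^ (card B - 1) * (\<Prod>l\<in>B - {h}. \<beta> h - \<beta> l)"
      using prod_uminus[of "\<lambda>l. \<beta> h - \<beta> l" "B - {h}"] h assms(2) by simp
    obtain c where "card B = Suc c"
      using h assms(2) by (cases "card B") auto
    then have "(-1::real) ^ r / ((-1) ^ card A * (-1) ^ (card B - 1)) = (-1) ^ (r + card A + card B + 1)"
      by (simp add: power_add field_simps)
    moreover have "(- \<beta> h) ^ r / ((\<Prod>j\<in>A. - \<beta> h - \<alpha> j) * (\<Prod>l\<in>B - {h}. - \<beta> h - - \<beta> l))
      = ((-1) ^ r / ((-1) ^ card A * (-1) ^ (card B - 1)))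
        * (\<beta> h ^ r / ((\<Prod>j\<in>A. \<beta> h + \<alpha> j) * (\<Prod>l\<in>B - {h}. \<beta> h - \<beta> l)))"
      unfolding prod_A prod_B power_minus[of "\<beta> h"] times_divide_times_eq by (simp only: mult_ac)
    ultimately show ?thesis
      by simp
  qed
  have "inj_on ?z (A <+> B)"
    using assms(3-5) by (fastforce simp: inj_on_def add_eq_0_iff)
  then have "power_divdiff ?z (A <+> B) r = (if Suc r = card A + card B then 1 else 0)"
    using power_divdiff_below_card[of "A <+> B" ?z r] assms by (simp add: card_Plus)
  moreover have "(-1) ^ (r + card A + card B + 1)
        * (\<Sum>h\<in>B. \<beta> h ^ r / ((\<Prod>j\<in>A. \<beta> h + \<alpha> j) * (\<Prod>l\<in>B - {h}. \<beta> h - \<beta> l)))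
      = (\<Sum>h\<in>B. (- \<beta> h) ^ r / ((\<Prod>j\<in>A. - \<beta> h - \<alpha> j) * (\<Prod>l\<in>B - {h}. - \<beta> h - - \<beta> l)))"
    unfolding sum_distrib_left by (rule sum.cong[OF refl sign])
  ultimately show ?thesis
    using power_divdiff_Plus[OF assms(1,2), of \<alpha> "\<lambda>h. - \<beta> h" r] by simp
qed

lemma pmf_urnII_Suc_Suc:
  assumes "al (Suc n) > 0" "be (Suc m) > 0"
  shows "(al (Suc n) + be (Suc m)) * pmf (urnII al be (Suc n) (Suc m)) i
     = be (Suc m) * pmf (urnII al be n (Suc m)) i + al (Suc n) * pmf (urnII al be (Suc n) m) i"
proof -
  let ?s = "al (Suc n) + be (Suc m)"
  have "0 \<le> be (Suc m) / ?s" "be (Suc m) / ?s \<le> 1" "1 - be (Suc m) / ?s = al (Suc n) / ?s"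
    using assms by (auto simp: field_simps)
  then have "pmf (urnII al be (Suc n) (Suc m)) i
      = be (Suc m) / ?s * pmf (urnII al be n (Suc m)) i + al (Suc n) / ?s * pmf (urnII al be (Suc n) m) i"
    by (simp add: pmf_bind mult.commute)
  moreover have "?s \<noteq> 0"
    using assms by simp
  ultimately show ?thesis
    by (simp add: distrib_left del: urnII.simps)
qed

lemma pmf_urnII_eqI:
  assumes pos: "\<And>n. al (Suc n) > 0" "\<And>m. be (Suc m) > 0"
    and rec: "\<And>n m. (al (Suc n) + be (Suc m)) * F (Suc n) (Suc m)
                     = be (Suc m) * F n (Suc m) + al (Suc n) * F (Suc n) m"
    and white_exhausted: "\<And>m. F 0 m = (if i = 0 then 1 else 0)"
    and black_exhausted: "\<And>n. F (Suc n) 0 = (if i = Suc n then 1 else 0)"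
  shows "pmf (urnII al be n m) i = F n m"
proof (induction "n + m" arbitrary: n m rule: less_induct)
  case less
  show ?case
  proof (cases n)
    case 0 then show ?thesis by (simp add: white_exhausted)
  next
    case (Suc n')
    show ?thesis
    proof (cases m)
      case 0 then show ?thesis using Suc by (simp add: black_exhausted)
    next
      case (Suc m')
      have "(al (Suc n') + be (Suc m')) * pmf (urnII al be (Suc n') (Suc m')) i
          = (al (Suc n') + be (Suc m')) * F (Suc n') (Suc m')"
        using pmf_urnII_Suc_Suc[of al n' be m' i] pos rec less.hyps \<open>n = Suc n'\<close> Suc by simp
      moreover have "al (Suc n') + be (Suc m') > 0"
        using pos by (simp add: add_pos_pos)
      ultimately show ?thesis
        using \<open>n = Suc n'\<close> Suc by simp
    qed
  qed
qed

text \<open>The weight w carries the k-dependent part of the exponent, so that the exponent n + m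
  never truncates and the recurrence holds everywhere, including m = 0, where the exponent
  m + n - k - 1 of the closed form would be negative.\<close>

definition alpha_fraction_sum ::
    "(nat \<Rightarrow> real) \<Rightarrow> (nat \<Rightarrow> real) \<Rightarrow> (nat \<Rightarrow> real) \<Rightarrow> nat \<Rightarrow> nat \<Rightarrow> nat \<Rightarrow> real" where
  "alpha_fraction_sum \<alpha> \<beta> w k n m =
     (\<Sum>j=k..n. w j * \<alpha> j ^ (n + m) /
        ((\<Prod>l\<in>{k..n} - {j}. \<alpha> j - \<alpha> l) * (\<Prod>h=1..m. \<alpha> j + \<beta> h)))"

lemma alpha_fraction_sum_Suc_Suc:
  assumes inj: "inj_on \<alpha> {k..Suc n}"
    and nz: "\<And>j h. j \<in> {k..Suc n} \<Longrightarrow> h \<in> {1..Suc m} \<Longrightarrow> \<alpha> j + \<beta> h \<noteq> 0"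
  shows "(\<alpha> (Suc n) + \<beta> (Suc m)) * alpha_fraction_sum \<alpha> \<beta> w k (Suc n) (Suc m)
    = \<beta> (Suc m) * alpha_fraction_sum \<alpha> \<beta> w k n (Suc m) + \<alpha> (Suc n) * alpha_fraction_sum \<alpha> \<beta> w k (Suc n) m"
proof (cases "k \<le> Suc n")
  case False
  then show ?thesis by (simp add: alpha_fraction_sum_def)
next
  case True
  define T where "T n m j = w j * \<alpha> j ^ (n + m) /
              ((\<Prod>l\<in>{k..n} - {j}. \<alpha> j - \<alpha> l) * (\<Prod>h=1..m. \<alpha> j + \<beta> h))" for n m j
  have sum_T: "alpha_fraction_sum \<alpha> \<beta> w k n' m' = (\<Sum>j=k..n'. T n' m' j)" for n' m'
    by (simp add: alpha_fraction_sum_def T_def)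
  have nodes: "{k..Suc n} = insert (Suc n) {k..n}"
    using True by (simp add: atLeastAtMostSuc_conv)
  have old_node: "(\<alpha> (Suc n) + \<beta> (Suc m)) * T (Suc n) (Suc m) j
      = \<beta> (Suc m) * T n (Suc m) j + \<alpha> (Suc n) * T (Suc n) m j" if j: "j \<in> {k..n}" for j
  proof -
    have "{k..Suc n} - {j} = insert (Suc n) ({k..n} - {j})"
      using nodes j by auto
    moreover have "(\<Prod>l\<in>{k..n} - {j}. \<alpha> j - \<alpha> l) \<noteq> 0" "\<alpha> j - \<alpha> (Suc n) \<noteq> 0"
      using inj j nodes by (auto simp: inj_on_def)
    moreover have "(\<Prod>h=1..m. \<alpha> j + \<beta> h) \<noteq> 0" "\<alpha> j + \<beta> (Suc m) \<noteq> 0"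
      using nz j by auto
    ultimately show ?thesis
      unfolding T_def by (simp add: divide_simps del: mult_eq_0_iff) (simp add: algebra_simps)
  qed
  have new_node: "(\<alpha> (Suc n) + \<beta> (Suc m)) * T (Suc n) (Suc m) (Suc n) = \<alpha> (Suc n) * T (Suc n) m (Suc n)"
    using nz[of "Suc n" "Suc m"] True by (simp add: T_def nodes)
  have "(\<alpha> (Suc n) + \<beta> (Suc m)) * (\<Sum>j\<in>insert (Suc n) {k..n}. T (Suc n) (Suc m) j)
      = \<alpha> (Suc n) * T (Suc n) m (Suc n)
        + (\<Sum>j=k..n. \<beta> (Suc m) * T n (Suc m) j + \<alpha> (Suc n) * T (Suc n) m j)"
    by (simp add: distrib_left sum_distrib_left new_node old_node)
  also have "\<dots> = \<beta> (Suc m) * (\<Sum>j=k..n. T n (Suc m) j)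
      + \<alpha> (Suc n) * (\<Sum>j\<in>insert (Suc n) {k..n}. T (Suc n) m j)"
    by (simp add: sum.distrib sum_distrib_left distrib_left)
  finally show ?thesis
    by (simp only: sum_T nodes)
qed

lemma alpha_fraction_sum_inverse_power_weight:
  assumes "\<And>j. j \<in> {k..n} \<Longrightarrow> \<alpha> j \<noteq> 0" "c \<le> n + m"
  shows "alpha_fraction_sum \<alpha> \<beta> (\<lambda>j. 1 / \<alpha> j ^ c) k n m
    = (\<Sum>j=k..n. \<alpha> j ^ (n + m - c) / ((\<Prod>l\<in>{k..n} - {j}. \<alpha> j - \<alpha> l) * (\<Prod>h=1..m. \<alpha> j + \<beta> h)))"
  unfolding alpha_fraction_sum_def using assms by (intro sum.cong) (simp_all add: power_diff)

lemma pmf_urnII_eq_alpha_fraction_sum: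
  fixes \<alpha> \<beta> :: "nat \<Rightarrow> real"
  assumes pos_a: "\<And>j. j \<ge> 1 \<Longrightarrow> \<alpha> j > 0" and pos_b: "\<And>h. h \<ge> 1 \<Longrightarrow> \<beta> h > 0"
    and inj_a: "inj_on \<alpha> {1..}" and "k \<ge> 1"
  shows "pmf (urnII \<alpha> \<beta> n m) k = \<alpha> k * alpha_fraction_sum \<alpha> \<beta> (\<lambda>j. 1 / \<alpha> j ^ Suc k) k n m"
proof (rule pmf_urnII_eqI)
  show "\<alpha> (Suc n) > 0" "\<beta> (Suc m) > 0" for n m
    using pos_a pos_b by simp_all
  show "(\<alpha> (Suc n) + \<beta> (Suc m)) * (\<alpha> k * alpha_fraction_sum \<alpha> \<beta> (\<lambda>j. 1 / \<alpha> j ^ Suc k) k (Suc n) (Suc m))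
      = \<beta> (Suc m) * (\<alpha> k * alpha_fraction_sum \<alpha> \<beta> (\<lambda>j. 1 / \<alpha> j ^ Suc k) k n (Suc m))
        + \<alpha> (Suc n) * (\<alpha> k * alpha_fraction_sum \<alpha> \<beta> (\<lambda>j. 1 / \<alpha> j ^ Suc k) k (Suc n) m)" for n m
  proof -
    have "inj_on \<alpha> {k..Suc n}"
      using \<open>k \<ge> 1\<close> by (auto intro: inj_on_subset[OF inj_a])
    moreover have "\<alpha> j + \<beta> h \<noteq> 0" if "j \<in> {k..Suc n}" "h \<in> {1..Suc m}" for j h
      using that pos_a[of j] pos_b[of h] \<open>k \<ge> 1\<close> by auto
    ultimately show ?thesis
      using alpha_fraction_sum_Suc_Suc[where w = "\<lambda>j. 1 / \<alpha> j ^ Suc k"] by (simp add: algebra_simps)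
  qed
  show "\<alpha> k * alpha_fraction_sum \<alpha> \<beta> (\<lambda>j. 1 / \<alpha> j ^ Suc k) k 0 m = (if k = 0 then 1 else 0)" for m
    using \<open>k \<ge> 1\<close> by (simp add: alpha_fraction_sum_def)
  show "\<alpha> k * alpha_fraction_sum \<alpha> \<beta> (\<lambda>j. 1 / \<alpha> j ^ Suc k) k (Suc n) 0 = (if k = Suc n then 1 else 0)" for n
  proof (cases "k \<le> n")
    case True
    have "\<alpha> j \<noteq> 0" if "j \<in> {k..Suc n}" for j
      using pos_a[of j] that \<open>k \<ge> 1\<close> by auto
    then have "alpha_fraction_sum \<alpha> \<beta> (\<lambda>j. 1 / \<alpha> j ^ Suc k) k (Suc n) 0 = power_divdiff \<alpha> {k..Suc n} (n - k)"
      using True by (subst alpha_fraction_sum_inverse_power_weight) (auto simp: power_divdiff_def)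
    also have "\<dots> = 0"
      using True \<open>k \<ge> 1\<close> by (subst power_divdiff_below_card) (auto intro: inj_on_subset[OF inj_a])
    finally show ?thesis using True by simp
  next
    case False
    then show ?thesis
      using pos_a[of k] \<open>k \<ge> 1\<close> by (cases "k = Suc n") (auto simp: alpha_fraction_sum_def)
  qed
qed

lemma pmf_urnII_0_eq_alpha_fraction_sum:
  fixes \<alpha> \<beta> :: "nat \<Rightarrow> real"
  assumes pos_a: "\<And>j. j \<ge> 1 \<Longrightarrow> \<alpha> j > 0" and pos_b: "\<And>h. h \<ge> 1 \<Longrightarrow> \<beta> h > 0"
    and inj_a: "inj_on \<alpha> {1..}"
  shows "pmf (urnII \<alpha> \<beta> n m) 0 = 1 - alpha_fraction_sum \<alpha> \<beta> (\<lambda>j. 1 / \<alpha> j) 1 n m"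
proof (rule pmf_urnII_eqI)
  show "\<alpha> (Suc n) > 0" "\<beta> (Suc m) > 0" for n m
    using pos_a pos_b by simp_all
  show "(\<alpha> (Suc n) + \<beta> (Suc m)) * (1 - alpha_fraction_sum \<alpha> \<beta> (\<lambda>j. 1 / \<alpha> j) 1 (Suc n) (Suc m))
      = \<beta> (Suc m) * (1 - alpha_fraction_sum \<alpha> \<beta> (\<lambda>j. 1 / \<alpha> j) 1 n (Suc m))
        + \<alpha> (Suc n) * (1 - alpha_fraction_sum \<alpha> \<beta> (\<lambda>j. 1 / \<alpha> j) 1 (Suc n) m)" for n m
  proof -
    have "inj_on \<alpha> {1..Suc n}"
      by (auto intro: inj_on_subset[OF inj_a])
    moreover have "\<alpha> j + \<beta> h \<noteq> 0" if "j \<in> {1..Suc n}" "h \<in> {1..Suc m}" for j h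
      using that pos_a[of j] pos_b[of h] by auto
    ultimately show ?thesis
      using alpha_fraction_sum_Suc_Suc[where w = "\<lambda>j. 1 / \<alpha> j"] by (simp add: algebra_simps)
  qed
  show "1 - alpha_fraction_sum \<alpha> \<beta> (\<lambda>j. 1 / \<alpha> j) 1 0 m = (if (0::nat) = 0 then 1 else 0)" for m
    by (simp add: alpha_fraction_sum_def)
  show "1 - alpha_fraction_sum \<alpha> \<beta> (\<lambda>j. 1 / \<alpha> j) 1 (Suc n) 0 = (if (0::nat) = Suc n then 1 else 0)" for n
  proof -
    have "alpha_fraction_sum \<alpha> \<beta> (\<lambda>j. 1 / \<alpha> j) 1 (Suc n) 0 = power_divdiff \<alpha> {1..Suc n} n"
      using alpha_fraction_sum_inverse_power_weight[where c = 1 and k = 1 and n = "Suc n" and m = 0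
          and \<alpha> = \<alpha> and \<beta> = \<beta>] pos_a
      by (force simp: power_divdiff_def)
    also have "\<dots> = 1"
      by (subst power_divdiff_below_card) (auto intro: inj_on_subset[OF inj_a])
    finally show ?thesis by simp
  qed
qed

lemma alpha_beta_fraction_sums_eq:
  fixes \<alpha> \<beta> :: "nat \<Rightarrow> real"
  assumes pos_a: "\<And>j. j \<ge> 1 \<Longrightarrow> \<alpha> j > 0" and pos_b: "\<And>h. h \<ge> 1 \<Longrightarrow> \<beta> h > 0"
    and inj_a: "inj_on \<alpha> {1..}" and inj_b: "inj_on \<beta> {1..}"
    and "1 \<le> k" "k \<le> n" "1 \<le> m"
  shows "(\<Sum>j=k..n. \<alpha> j ^ (m + n - k - 1) /
            ((\<Prod>l\<in>{k..n} - {j}. \<alpha> j - \<alpha> l) * (\<Prod>h=1..m. \<alpha> j + \<beta> h)))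
       = (\<Sum>l=1..m. \<beta> l ^ (n + m - 1 - k) /
            ((\<Prod>j=k..n. \<beta> l + \<alpha> j) * (\<Prod>h\<in>{1..m} - {l}. \<beta> l - \<beta> h)))"
proof -
  let ?r = "m + n - k - 1"
  have card: "card {k..n} + card {1..m} = Suc (Suc ?r)"
    using assms(5-7) by simp
  moreover have "(-1::real) ^ (?r + card {k..n} + card {1..m} + 1) = -1"
    unfolding add.assoc card by simp
  moreover have "inj_on \<alpha> {k..n}" "inj_on \<beta> {1..m}"
    using \<open>1 \<le> k\<close> by (auto intro: inj_on_subset[OF inj_a] inj_on_subset[OF inj_b])
  moreover have "\<alpha> j + \<beta> h \<noteq> 0" if "j \<in> {k..n}" "h \<in> {1..m}" for j h
    using that pos_a[of j] pos_b[of h] \<open>1 \<le> k\<close> by auto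
  ultimately have "(\<Sum>j=k..n. \<alpha> j ^ ?r /
            ((\<Prod>l\<in>{k..n} - {j}. \<alpha> j - \<alpha> l) * (\<Prod>h=1..m. \<alpha> j + \<beta> h)))
       - (\<Sum>l=1..m. \<beta> l ^ ?r /
            ((\<Prod>j=k..n. \<beta> l + \<alpha> j) * (\<Prod>h\<in>{1..m} - {l}. \<beta> l - \<beta> h))) = 0"
    using sum_power_fractions_two_families[of "{k..n}" "{1..m}" \<alpha> \<beta> ?r] by simp
  moreover have "n + m - 1 - k = ?r"
    by simp
  ultimately show ?thesis
    by simp
qed

lemma alpha_beta_fraction_sums_complement:
  fixes \<alpha> \<beta> :: "nat \<Rightarrow> real"
  assumes pos_a: "\<And>j. j \<ge> 1 \<Longrightarrow> \<alpha> j > 0" and pos_b: "\<And>h. h \<ge> 1 \<Longrightarrow> \<beta> h > 0"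
    and inj_a: "inj_on \<alpha> {1..}" and inj_b: "inj_on \<beta> {1..}"
    and "1 \<le> n + m"
  shows "1 - (\<Sum>j=1..n. \<alpha> j ^ (n + m - 1) /
            ((\<Prod>l\<in>{1..n} - {j}. \<alpha> j - \<alpha> l) * (\<Prod>h=1..m. \<alpha> j + \<beta> h)))
       = (\<Sum>l=1..m. \<beta> l ^ (n + m - 1) /
            ((\<Prod>j=1..n. \<beta> l + \<alpha> j) * (\<Prod>h\<in>{1..m} - {l}. \<beta> l - \<beta> h)))"
proof -
  have card: "card {1..n} + card {1..m} = Suc (n + m - 1)"
    using assms(5) by simp
  moreover have "(-1::real) ^ (n + m - 1 + card {1..n} + card {1..m} + 1) = 1"
    unfolding add.assoc card by simp
  moreover have "inj_on \<alpha> {1..n}" "inj_on \<beta> {1..m}"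
    by (auto intro: inj_on_subset[OF inj_a] inj_on_subset[OF inj_b])
  moreover have "\<alpha> j + \<beta> h \<noteq> 0" if "j \<in> {1..n}" "h \<in> {1..m}" for j h
    using that pos_a[of j] pos_b[of h] by auto
  ultimately show ?thesis
    using sum_power_fractions_two_families[of "{1..n}" "{1..m}" \<alpha> \<beta> "n + m - 1"] by simp
qed

lemma pmf_urnII_closed_form:
  fixes \<alpha> \<beta> :: "nat \<Rightarrow> real"
  assumes pos_a: "\<And>j. j \<ge> 1 \<Longrightarrow> \<alpha> j > 0" and pos_b: "\<And>h. h \<ge> 1 \<Longrightarrow> \<beta> h > 0"
    and inj_a: "inj_on \<alpha> {1..}" and "1 \<le> k" "k \<le> n" "1 \<le> m"
  shows "pmf (urnII \<alpha> \<beta> n m) k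
    = \<alpha> k * (\<Sum>j=k..n. \<alpha> j ^ (m + n - k - 1) /
        ((\<Prod>l\<in>{k..n} - {j}. \<alpha> j - \<alpha> l) * (\<Prod>h=1..m. \<alpha> j + \<beta> h)))"
proof -
  have "\<alpha> j \<noteq> 0" if "j \<in> {k..n}" for j
    using pos_a[of j] that \<open>1 \<le> k\<close> by auto
  then have "alpha_fraction_sum \<alpha> \<beta> (\<lambda>j. 1 / \<alpha> j ^ Suc k) k n m
      = (\<Sum>j=k..n. \<alpha> j ^ (m + n - k - 1) /
           ((\<Prod>l\<in>{k..n} - {j}. \<alpha> j - \<alpha> l) * (\<Prod>h=1..m. \<alpha> j + \<beta> h)))"
    using \<open>k \<le> n\<close> \<open>1 \<le> m\<close>
    by (subst alpha_fraction_sum_inverse_power_weight) (simp_all add: add.commute)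
  then show ?thesis
    using pmf_urnII_eq_alpha_fraction_sum[OF pos_a pos_b inj_a \<open>1 \<le> k\<close>] by simp
qed

lemma pmf_urnII_0_closed_form:
  fixes \<alpha> \<beta> :: "nat \<Rightarrow> real"
  assumes pos_a: "\<And>j. j \<ge> 1 \<Longrightarrow> \<alpha> j > 0" and pos_b: "\<And>h. h \<ge> 1 \<Longrightarrow> \<beta> h > 0"
    and inj_a: "inj_on \<alpha> {1..}" and "1 \<le> n"
  shows "pmf (urnII \<alpha> \<beta> n m) 0
    = 1 - (\<Sum>j=1..n. \<alpha> j ^ (n + m - 1) /
        ((\<Prod>l\<in>{1..n} - {j}. \<alpha> j - \<alpha> l) * (\<Prod>h=1..m. \<alpha> j + \<beta> h)))"
proof -
  have "\<alpha> j \<noteq> 0" if "j \<in> {1..n}" for j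
    using pos_a[of j] that by auto
  then have "alpha_fraction_sum \<alpha> \<beta> (\<lambda>j. 1 / \<alpha> j ^ 1) 1 n m
      = (\<Sum>j=1..n. \<alpha> j ^ (n + m - 1) /
           ((\<Prod>l\<in>{1..n} - {j}. \<alpha> j - \<alpha> l) * (\<Prod>h=1..m. \<alpha> j + \<beta> h)))"
    using \<open>1 \<le> n\<close> by (subst alpha_fraction_sum_inverse_power_weight) simp_all
  then show ?thesis
    using pmf_urnII_0_eq_alpha_fraction_sum[OF pos_a pos_b inj_a] by simp
qed

theorem theorem2:
  fixes \<alpha> \<beta> :: "nat \<Rightarrow> real"
  assumes pos_a: "\<And>n. n \<ge> 1 \<Longrightarrow> \<alpha> n > 0"
    and pos_b: "\<And>m. m \<ge> 1 \<Longrightarrow> \<beta> m > 0"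
    and inj_a: "inj_on \<alpha> {1..}"
    and inj_b: "inj_on \<beta> {1..}"
  shows "(\<forall>n m k. 1 \<le> n \<longrightarrow> 1 \<le> m \<longrightarrow> 1 \<le> k \<longrightarrow> k \<le> n \<longrightarrow>
            pmf (urnII \<alpha> \<beta> n m) k
              = \<alpha> k * (\<Sum>j=k..n. \<alpha> j ^ (m + n - k - 1) /
                   ((\<Prod>l\<in>{k..n} - {j}. \<alpha> j - \<alpha> l) * (\<Prod>h=1..m. \<alpha> j + \<beta> h)))
            \<and> \<alpha> k * (\<Sum>j=k..n. \<alpha> j ^ (m + n - k - 1) /
                   ((\<Prod>l\<in>{k..n} - {j}. \<alpha> j - \<alpha> l) * (\<Prod>h=1..m. \<alpha> j + \<beta> h)))
              = \<alpha> k * (\<Sum>l=1..m. \<beta> l ^ (n + m - 1 - k) /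
                   ((\<Prod>j=k..n. \<beta> l + \<alpha> j) * (\<Prod>h\<in>{1..m} - {l}. \<beta> l - \<beta> h))))
       \<and> (\<forall>n m. 1 \<le> n \<longrightarrow> 1 \<le> m \<longrightarrow>
            pmf (urnII \<alpha> \<beta> n m) 0
              = 1 - (\<Sum>j=1..n. \<alpha> j ^ (n + m - 1) /
                   ((\<Prod>l\<in>{1..n} - {j}. \<alpha> j - \<alpha> l) * (\<Prod>h=1..m. \<alpha> j + \<beta> h)))
            \<and> 1 - (\<Sum>j=1..n. \<alpha> j ^ (n + m - 1) /
                   ((\<Prod>l\<in>{1..n} - {j}. \<alpha> j - \<alpha> l) * (\<Prod>h=1..m. \<alpha> j + \<beta> h)))
              = (\<Sum>l=1..m. \<beta> l ^ (n + m - 1) /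
                   ((\<Prod>j=1..n. \<beta> l + \<alpha> j) * (\<Prod>h\<in>{1..m} - {l}. \<beta> l - \<beta> h))))"
  using pmf_urnII_closed_form[OF pos_a pos_b inj_a]
    alpha_beta_fraction_sums_eq[OF pos_a pos_b inj_a inj_b]
    pmf_urnII_0_closed_form[OF pos_a pos_b inj_a]
    alpha_beta_fraction_sums_complement[OF pos_a pos_b inj_a inj_b]
  by simp

end
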